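(* Let $M$ be a modular-magic Sudoku board. For each $j\in\{0,3,6\}$, consider the three blocks of $M$ whose center entry is $j$. Then among the three off-diagonal sets of these three blocks, at least two are equal.
   Context: A Sudoku board is a $9\times 9$ array with entries from $\{0,1,\dots,8\}$ such that every row, every column, and every one of the nine $3\times 3$ blocks (rows $3a+1,\dots,3a+3$, columns $3b+1,\dots,3b+3$, $a,b\in\{0,1,2\}$) contains each symbol exactly once. Within a block, a mini-row, mini-column, or mini-diagonal is a row, column, or one of the two diagonals of that $3\times 3$ block. A modular-magic Sudoku board is a Sudoku board in which, for every block, the sum of the entries of each mini-row, each mini-column and each of the two mini-diagonals is divisible by $9$. In every block of a modular-magic board, one of the two mini-diagonals has entry set $\{0,3,6\}$, and for each $j\in\{0,3,6\}$ exactly three blocks have center entry $j$. The off-diagonal set of a block is the set of the two corner entries of the mini-diagonal whose entries are not from $\{0,3,6\}$. *)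

theory Defs
  imports Main
begin

type_synonym board = "nat \<Rightarrow> nat \<Rightarrow> nat"

definition blk :: "board \<Rightarrow> nat \<Rightarrow> nat \<Rightarrow> nat \<Rightarrow> nat \<Rightarrow> nat" where
  "blk M a b i j = M (3*a + i) (3*b + j)"

definition sudoku :: "board \<Rightarrow> bool" where
  "sudoku M \<longleftrightarrow>
     (\<forall>r<9. bij_betw (\<lambda>c. M r c) {..<9} {..<9}) \<and>
     (\<forall>c<9. bij_betw (\<lambda>r. M r c) {..<9} {..<9}) \<and>
     (\<forall>a<3. \<forall>b<3. bij_betw (\<lambda>(i,j). blk M a b i j) ({..<3} \<times> {..<3}) {..<9})"

definition modular_magic :: "board \<Rightarrow> bool" where
  "modular_magic M \<longleftrightarrow> sudoku M \<and>
     (\<forall>a<3. \<forall>b<3.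
        (\<forall>i<3. 9 dvd (blk M a b i 0 + blk M a b i 1 + blk M a b i 2)) \<and>
        (\<forall>j<3. 9 dvd (blk M a b 0 j + blk M a b 1 j + blk M a b 2 j)) \<and>
        9 dvd (blk M a b 0 0 + blk M a b 1 1 + blk M a b 2 2) \<and>
        9 dvd (blk M a b 0 2 + blk M a b 1 1 + blk M a b 2 0))"

definition center :: "board \<Rightarrow> nat \<Rightarrow> nat \<Rightarrow> nat" where
  "center M a b = blk M a b 1 1"

definition off_diag :: "board \<Rightarrow> nat \<Rightarrow> nat \<Rightarrow> nat set" where
  "off_diag M a b =
     (if {blk M a b 0 0, blk M a b 1 1, blk M a b 2 2} = {0,3,6}
      then {blk M a b 0 2, blk M a b 2 0}
      else {blk M a b 0 0, blk M a b 2 2})"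

end

theory Submission
  imports Defs
begin

text \<open>In a modular-magic block with centre c the four lines through the centre sum to
  36 + 3c, so c is a multiple of 3, and opposite entries x, y satisfy x + y + c = 0 (mod 9).
  Three distinct entries outside {0, 3, 6} never sum to a multiple of 9, so every line of the
  block meets {0, 3, 6}; this puts {0, 3, 6} on a diagonal, and the middle row, the middle
  column and the other diagonal carry the three pairs of partners of c among {1, 2, 4, 5, 7, 8}.
  Classify such a pair by (x - y)^2 mod 9: for a fixed centre the class determines the pair,
  while disjoint pairs for different centres have equal classes.  Blocks in one row of blocks
  share board rows, so their middle-row classes coincide; likewise for middle columns.  Hence
  the middle-row and middle-column classes are disjoint subsets of the three classes, one of
  them is a single class t, and the three blocks with centre j have off-diagonal classes
  different from t.  Two of them agree, and equal class with equal centre means equal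
  off-diagonal set.\<close>

definition modular_magic_square :: "(nat \<Rightarrow> nat \<Rightarrow> nat) \<Rightarrow> bool" where
  "modular_magic_square Q \<longleftrightarrow>
     bij_betw (\<lambda>(i, j). Q i j) ({..<3} \<times> {..<3}) {..<9} \<and>
     (\<forall>i<3. 9 dvd (Q i 0 + Q i 1 + Q i 2)) \<and>
     (\<forall>j<3. 9 dvd (Q 0 j + Q 1 j + Q 2 j)) \<and>
     9 dvd (Q 0 0 + Q 1 1 + Q 2 2) \<and>
     9 dvd (Q 0 2 + Q 1 1 + Q 2 0)"

definition partners :: "nat \<Rightarrow> nat \<Rightarrow> nat \<Rightarrow> bool" where
  "partners c x y \<longleftrightarrow> x < 9 \<and> y < 9 \<and> x \<notin> {0, 3, 6} \<and> 9 dvd (x + y + c)"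

definition pair_class :: "nat \<Rightarrow> nat \<Rightarrow> int" where
  "pair_class x y = (int x - int y)\<^sup>2 mod 9"

definition partner_table :: "(nat \<times> nat set \<times> int) set" where
  "partner_table =
    {(0, {1, 8}, 4), (0, {2, 7}, 7), (0, {4, 5}, 1),
     (3, {2, 4}, 4), (3, {1, 5}, 7), (3, {7, 8}, 1),
     (6, {5, 7}, 4), (6, {4, 8}, 7), (6, {1, 2}, 1)}"

lemma less_9_cases:
  fixes x :: nat
  assumes "x < 9"
  obtains "x = 0" | "x = 1" | "x = 2" | "x = 3" | "x = 4" | "x = 5" | "x = 6" | "x = 7" | "x = 8"
  using assms by (auto simp: numeral_eq_Suc less_Suc_eq)

lemma collision_avoiding_disjoint_labellings:
  assumes S: "card S = 3" and I: "finite I" "3 \<le> card I"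
    and maps: "R ` I \<subseteq> S" "C ` I \<subseteq> S" "K ` I \<subseteq> S"
    and RC: "\<And>i i'. i \<in> I \<Longrightarrow> i' \<in> I \<Longrightarrow> R i \<noteq> C i'"
    and KR: "\<And>i. i \<in> I \<Longrightarrow> K i \<noteq> R i" and KC: "\<And>i. i \<in> I \<Longrightarrow> K i \<noteq> C i"
  shows "\<exists>i\<in>I. \<exists>i'\<in>I. i \<noteq> i' \<and> K i = K i'"
proof -
  \<comment> \<open>\<open>R ` I\<close> and \<open>C ` I\<close> are disjoint in the three-element set \<open>S\<close>, so one is a singleton
    \<open>{t}\<close>, and \<open>K\<close> maps \<open>I\<close> into \<open>S - {t}\<close>.\<close>
  have "finite S" using S by (simp add: card_ge_0_finite)
  have "I \<noteq> {}" using I by auto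
  have avoid: "\<exists>t\<in>S. \<forall>i\<in>I. K i \<noteq> t"
    if L: "card (L ` I) = 1" "L ` I \<subseteq> S" "\<And>i. i \<in> I \<Longrightarrow> K i \<noteq> L i" for L
  proof -
    obtain t where t: "L ` I = {t}" using card_1_singletonE[OF L(1)] .
    have "K i \<noteq> t" if "i \<in> I" for i
      using L(3)[OF that] t that by (metis imageI singletonD)
    moreover have "t \<in> S" using L(2) t by simp
    ultimately show ?thesis by blast
  qed
  have "card (R ` I) + card (C ` I) = card (R ` I \<union> C ` I)"
    using RC I(1) by (intro card_Un_disjoint[symmetric]) auto
  also have "\<dots> \<le> 3"
    using maps S \<open>finite S\<close> by (metis Un_least card_mono)
  moreover have "card (R ` I) \<noteq> 0" "card (C ` I) \<noteq> 0"
    using \<open>I \<noteq> {}\<close> I(1) by simp_all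
  ultimately have "card (R ` I) = 1 \<or> card (C ` I) = 1"
    by linarith
  then obtain t where "t \<in> S" "\<forall>i\<in>I. K i \<noteq> t"
    using avoid[of R] avoid[of C] maps KR KC by blast
  then have "K ` I \<subseteq> S - {t}" "card (S - {t}) < card I"
    using maps S I by auto
  then have "\<not> inj_on K I"
    using card_inj_on_le[of K I "S - {t}"] \<open>finite S\<close> by fastforce
  then show ?thesis unfolding inj_on_def by blast
qed

lemma partners_in_partner_table:
  assumes "c \<in> {0, 3, 6}" "partners c x y"
  shows "(c, {x, y}, pair_class x y) \<in> partner_table"
proof -
  have "x < 9" "y < 9" "x \<notin> {0, 3, 6}" "(x + y + c) mod 9 = 0"
    using assms(2) unfolding partners_def by simp_all
  with assms(1) show ?thesis unfolding pair_class_def partner_table_def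
    by (elim insertE emptyE less_9_cases; simp add: insert_commute)
qed

lemma partners_same_class_imp_eq:
  assumes "c \<in> {0, 3, 6}" "partners c x y" "partners c x' y'"
    and "pair_class x y = pair_class x' y'"
  shows "{x, y} = {x', y'}"
proof -
  have "A = B" if "(c, A, k) \<in> partner_table" "(c, B, k) \<in> partner_table" for A B k
    using that unfolding partner_table_def by (elim insertE emptyE; simp)
  then show ?thesis
    using partners_in_partner_table[OF assms(1,2)] partners_in_partner_table[OF assms(1,3)] assms(4)
    by metis
qed

lemma partners_disjoint_imp_class_ne:
  assumes "c \<in> {0, 3, 6}" "partners c x y" "partners c x' y'" "{x, y} \<inter> {x', y'} = {}"
  shows "pair_class x y \<noteq> pair_class x' y'"
  using partners_same_class_imp_eq[OF assms(1-3)] assms(4) by auto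

lemma partners_disjoint_imp_class_eq:
  assumes "c \<in> {0, 3, 6}" "c' \<in> {0, 3, 6}" "c \<noteq> c'"
    and "partners c x y" "partners c' x' y'" "{x, y} \<inter> {x', y'} = {}"
  shows "pair_class x y = pair_class x' y'"
proof -
  have "k = k'" if "(c, A, k) \<in> partner_table" "(c', B, k') \<in> partner_table" "A \<inter> B = {}"
    for A B k k'
    using that \<open>c \<noteq> c'\<close> unfolding partner_table_def by (elim insertE emptyE; simp)
  then show ?thesis
    using partners_in_partner_table[OF assms(1,4)] partners_in_partner_table[OF assms(2,5)] assms(6)
    by blast
qed

lemma partners_class_range:
  assumes "c \<in> {0, 3, 6}" "partners c x y"
  shows "pair_class x y \<in> {1, 4, 7}"
proof -
  have "k \<in> {1, 4, 7}" if "(c, A, k) \<in> partner_table" for A k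
    using that unfolding partner_table_def by (elim insertE emptyE; simp)
  then show ?thesis using partners_in_partner_table[OF assms] by blast
qed

lemma pair_class_commute: "pair_class x y = pair_class y x"
  by (simp add: pair_class_def power2_commute)

lemma mult3_complement:
  fixes x y z :: nat
  assumes "x \<in> {0, 3, 6}" "y \<in> {0, 3, 6}" "z < 9" "9 dvd (x + y + z)"
  shows "z \<in> {0, 3, 6}"
proof -
  have "(x + y + z) mod 9 = 0" using assms(4) by simp
  with assms(1-3) show ?thesis by (elim insertE emptyE less_9_cases; simp)
qed

lemma distinct_mult3_eq:
  assumes "{x, y, z} \<subseteq> {0, 3, 6 :: nat}" "distinct [x, y, z]"
  shows "{x, y, z} = {0, 3, 6}"
  using assms by (intro card_subset_eq) auto

lemma line_meets_mult3:
  fixes x y z :: nat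
  assumes "x < 9" "y < 9" "z < 9" "distinct [x, y, z]" "9 dvd (x + y + z)"
  shows "{x, y, z} \<inter> {0, 3, 6} \<noteq> {}"
proof -
  have "(x + y + z) mod 9 = 0" using assms(5) by simp
  with assms(1-4) show ?thesis by (elim less_9_cases; simp)
qed

lemma modular_magic_square_entry_less:
  assumes "modular_magic_square Q" "i < 3" "j < 3"
  shows "Q i j < 9"
  using assms bij_betw_apply[of "\<lambda>(i, j). Q i j" _ _ "(i, j)"]
  unfolding modular_magic_square_def by fastforce

lemma modular_magic_square_distinct:
  assumes "modular_magic_square Q"
  shows "distinct [Q 0 0, Q 0 1, Q 0 2, Q 1 0, Q 1 1, Q 1 2, Q 2 0, Q 2 1, Q 2 2]"
proof -
  have inj: "inj_on (\<lambda>(i, j). Q i j) ({..<3} \<times> {..<3})"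
    using assms bij_betw_imp_inj_on unfolding modular_magic_square_def by blast
  have "distinct (map (\<lambda>(i, j). Q i j)
      [(0, 0), (0, 1), (0, 2), (1, 0), (1, 1), (1, 2), (2, 0), (2, 1), (2, 2)])"
    unfolding distinct_map by (intro conjI inj_on_subset[OF inj]) auto
  then show ?thesis by simp
qed

lemma modular_magic_square_sum:
  assumes "modular_magic_square Q"
  shows "Q 0 0 + Q 0 1 + Q 0 2 + Q 1 0 + Q 1 1 + Q 1 2 + Q 2 0 + Q 2 1 + Q 2 2 = 36"
proof -
  have "bij_betw (\<lambda>(i, j). Q i j) ({..<3} \<times> {..<3}) {..<9}"
    using assms unfolding modular_magic_square_def by blast
  from sum.reindex_bij_betw[OF this, of "\<lambda>x. x"]
  have "(\<Sum>(i, j)\<in>{..<3} \<times> {..<3}. Q i j) = (\<Sum>x<9. x)"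
    by (simp add: case_prod_beta')
  then show ?thesis
    by (simp add: sum.cartesian_product[symmetric] numeral_3_eq_3 numeral_eq_Suc lessThan_Suc)
qed

lemma modular_magic_square_center:
  assumes "modular_magic_square Q"
  shows "Q 1 1 \<in> {0, 3, 6}"
proof -
  have lines: "9 dvd (Q 1 0 + Q 1 1 + Q 1 2)" "9 dvd (Q 0 1 + Q 1 1 + Q 2 1)"
    "9 dvd (Q 0 0 + Q 1 1 + Q 2 2)" "9 dvd (Q 0 2 + Q 1 1 + Q 2 0)"
    using assms unfolding modular_magic_square_def by auto
  have "(Q 1 0 + Q 1 1 + Q 1 2) + (Q 0 1 + Q 1 1 + Q 2 1) + (Q 0 0 + Q 1 1 + Q 2 2)
      + (Q 0 2 + Q 1 1 + Q 2 0) = 36 + 3 * Q 1 1"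
    using modular_magic_square_sum[OF assms] by simp
  with lines have "(36 + 3 * Q 1 1) mod 9 = 0"
    by (metis dvd_add dvd_eq_mod_eq_0)
  moreover have "Q 1 1 < 9" using modular_magic_square_entry_less[OF assms] by simp
  ultimately show ?thesis by (elim less_9_cases; simp)
qed

lemma modular_magic_square_mid_row_partners:
  assumes Q: "modular_magic_square Q"
  shows "partners (Q 1 1) (Q 1 0) (Q 1 2)"
proof -
  note less = modular_magic_square_entry_less[OF Q]
  note center = modular_magic_square_center[OF Q]
  have dist: "distinct [Q 0 0, Q 0 1, Q 0 2, Q 1 0, Q 1 1, Q 1 2, Q 2 0, Q 2 1, Q 2 2]"
    using modular_magic_square_distinct[OF Q] .
  have row: "9 dvd (Q 1 0 + Q 1 1 + Q 1 2)" and top: "9 dvd (Q 0 0 + Q 0 1 + Q 0 2)"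
    using Q unfolding modular_magic_square_def by (auto simp: ac_simps)
  have "Q 1 0 \<notin> {0, 3, 6}" \<comment> \<open>otherwise the top row would miss \<open>{0, 3, 6}\<close>\<close>
  proof
    assume Q10: "Q 1 0 \<in> {0, 3, 6}"
    then have "Q 1 2 \<in> {0, 3, 6}"
      using mult3_complement[OF Q10 center _ row] less by simp
    with Q10 center dist have mid: "{Q 1 0, Q 1 1, Q 1 2} = {0, 3, 6}"
      by (intro distinct_mult3_eq) auto
    have "{Q 0 0, Q 0 1, Q 0 2} \<inter> {0, 3, 6} \<noteq> {}"
      using line_meets_mult3[OF _ _ _ _ top] less dist by simp
    then obtain w where "w \<in> {Q 0 0, Q 0 1, Q 0 2}" "w \<in> {Q 1 0, Q 1 1, Q 1 2}"
      unfolding mid by blast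
    with dist show False by auto
  qed
  with row less show ?thesis unfolding partners_def by (simp add: ac_simps)
qed

lemma modular_magic_square_off_diagonal:
  assumes Q: "modular_magic_square Q"
  obtains x y where
    "(if {Q 0 0, Q 1 1, Q 2 2} = {0, 3, 6} then {Q 0 2, Q 2 0} else {Q 0 0, Q 2 2}) = {x, y}"
    "partners (Q 1 1) x y" "{x, y} \<subseteq> {Q 0 0, Q 0 2, Q 2 0, Q 2 2}"
proof -
  note less = modular_magic_square_entry_less[OF Q]
  note center = modular_magic_square_center[OF Q]
  have dist: "distinct [Q 0 0, Q 0 1, Q 0 2, Q 1 0, Q 1 1, Q 1 2, Q 2 0, Q 2 1, Q 2 2]"
    using modular_magic_square_distinct[OF Q] .
  have diag: "9 dvd (Q 0 0 + Q 1 1 + Q 2 2)" and anti: "9 dvd (Q 0 2 + Q 2 0 + Q 1 1)"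
    using Q unfolding modular_magic_square_def by (auto simp: ac_simps)
  show thesis
  proof (cases "{Q 0 0, Q 1 1, Q 2 2} = {0, 3, 6}")
    case True
    have "Q 0 2 \<notin> {Q 0 0, Q 1 1, Q 2 2}" using dist by auto
    then have "Q 0 2 \<notin> {0, 3, 6}" unfolding True .
    with True anti less show thesis by (intro that[of "Q 0 2" "Q 2 0"]) (auto simp: partners_def)
  next
    case False
    have "Q 0 0 \<notin> {0, 3, 6}"
    proof
      assume Q00: "Q 0 0 \<in> {0, 3, 6}"
      then have "Q 2 2 \<in> {0, 3, 6}" using mult3_complement[OF Q00 center _ diag] less by simp
      with Q00 center dist have "{Q 0 0, Q 1 1, Q 2 2} = {0, 3, 6}"
        by (intro distinct_mult3_eq) auto
      with False show False ..
    qed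
    with False diag less show thesis
      by (intro that[of "Q 0 0" "Q 2 2"]) (auto simp: partners_def ac_simps)
  qed
qed

lemma modular_magic_blk:
  assumes "modular_magic M" "a < 3" "b < 3"
  shows "modular_magic_square (blk M a b)"
  using assms unfolding modular_magic_def sudoku_def modular_magic_square_def by blast

definition transpose_board :: "board \<Rightarrow> board" where
  "transpose_board M = (\<lambda>r c. M c r)"

lemma blk_transpose_board: "blk (transpose_board M) a b i j = blk M b a j i"
  by (simp add: blk_def transpose_board_def)

lemma modular_magic_transpose_board:
  assumes "modular_magic M"
  shows "modular_magic (transpose_board M)"
proof -
  have swap: "bij_betw (\<lambda>(i, j). (j, i)) ({..<3::nat} \<times> {..<3::nat}) ({..<3} \<times> {..<3})"
    unfolding bij_betw_def by (simp add: swap_inj_on swap_product)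
  have blocks: "bij_betw (\<lambda>(i, j). blk (transpose_board M) a b i j) ({..<3} \<times> {..<3}) {..<9}"
    if "a < 3" "b < 3" for a b
  proof -
    have "bij_betw (\<lambda>(i, j). blk M b a i j) ({..<3} \<times> {..<3}) {..<9}"
      using assms that unfolding modular_magic_def sudoku_def by blast
    from bij_betw_trans[OF swap this] show ?thesis
      by (simp add: blk_transpose_board comp_def case_prod_beta')
  qed
  show ?thesis
    using assms blocks
    unfolding modular_magic_def sudoku_def blk_transpose_board
    by (simp add: transpose_board_def ac_simps)
qed

lemma center_transpose_board: "center (transpose_board M) a b = center M b a"
  by (simp add: center_def blk_transpose_board)

lemma sudoku_row_inj:
  assumes "sudoku M" "r < 9" "c < 9" "c' < 9" "M r c = M r c'"
  shows "c = c'"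
proof -
  have "bij_betw (\<lambda>c. M r c) {..<9} {..<9}" using assms(1,2) unfolding sudoku_def by blast
  then have "inj_on (M r) {..<9}" by (simp add: bij_betw_def)
  with assms(3-5) show ?thesis by (simp add: inj_on_eq_iff)
qed

lemma modular_magic_mid_row_inj:
  assumes "modular_magic M" "r < 3" "s < 3" "s' < 3" "k < 3" "k' < 3"
    and "blk M r s 1 k = blk M r s' 1 k'"
  shows "s = s' \<and> k = k'"
proof -
  have "sudoku M" using assms(1) unfolding modular_magic_def by blast
  then have "3 * s + k = 3 * s' + k'"
    by (rule sudoku_row_inj[of M "3 * r + 1"]) (use assms in \<open>simp_all add: blk_def\<close>)
  with assms(5,6) show ?thesis by presburger
qed

definition mid_row_class :: "board \<Rightarrow> nat \<Rightarrow> nat \<Rightarrow> int" where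
  "mid_row_class M r s = pair_class (blk M r s 1 0) (blk M r s 1 2)"

definition mid_col_class :: "board \<Rightarrow> nat \<Rightarrow> nat \<Rightarrow> int" where
  "mid_col_class M r s = pair_class (blk M r s 0 1) (blk M r s 2 1)"

definition off_diag_class :: "board \<Rightarrow> nat \<Rightarrow> nat \<Rightarrow> int" where
  "off_diag_class M r s = pair_class (Min (off_diag M r s)) (Max (off_diag M r s))"

lemma mid_col_class_eq_mid_row_class_transpose:
  "mid_col_class M r s = mid_row_class (transpose_board M) s r"
  by (simp add: mid_col_class_def mid_row_class_def blk_transpose_board)

lemma modular_magic_center:
  "modular_magic M \<Longrightarrow> r < 3 \<Longrightarrow> s < 3 \<Longrightarrow> center M r s \<in> {0, 3, 6}"
  unfolding center_def by (rule modular_magic_square_center[OF modular_magic_blk])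

lemma modular_magic_mid_row_partners:
  "modular_magic M \<Longrightarrow> r < 3 \<Longrightarrow> s < 3 \<Longrightarrow>
    partners (center M r s) (blk M r s 1 0) (blk M r s 1 2)"
  unfolding center_def by (rule modular_magic_square_mid_row_partners[OF modular_magic_blk])

lemma modular_magic_mid_col_partners:
  "modular_magic M \<Longrightarrow> r < 3 \<Longrightarrow> s < 3 \<Longrightarrow>
    partners (center M r s) (blk M r s 0 1) (blk M r s 2 1)"
  using modular_magic_mid_row_partners[OF modular_magic_transpose_board, of M s r]
  by (simp add: center_transpose_board blk_transpose_board)

lemma mid_row_class_same_block_row:
  assumes M: "modular_magic M" and rs: "r < 3" "s < 3" "s' < 3"
  shows "mid_row_class M r s = mid_row_class M r s'"
proof (cases "s = s'")
  case False
  have ne: "blk M r s 1 k \<noteq> blk M r s' 1 k'" if "k < 3" "k' < 3" for k k'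
    using modular_magic_mid_row_inj[OF M rs that] False by blast
  have "center M r s \<noteq> center M r s'" unfolding center_def using ne by simp
  moreover have "{blk M r s 1 0, blk M r s 1 2} \<inter> {blk M r s' 1 0, blk M r s' 1 2} = {}"
    using ne by simp
  ultimately show ?thesis
    unfolding mid_row_class_def
    by (rule partners_disjoint_imp_class_eq[OF modular_magic_center[OF M rs(1,2)]
          modular_magic_center[OF M rs(1,3)] _ modular_magic_mid_row_partners[OF M rs(1,2)]
          modular_magic_mid_row_partners[OF M rs(1,3)]])
qed simp

lemma mid_col_class_same_block_col:
  assumes "modular_magic M" "r < 3" "r' < 3" "s < 3"
  shows "mid_col_class M r s = mid_col_class M r' s"
  using mid_row_class_same_block_row[OF modular_magic_transpose_board[OF assms(1)] assms(4,2,3)]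
  by (simp add: mid_col_class_eq_mid_row_class_transpose)

lemma off_diag_partners:
  assumes M: "modular_magic M" and rs: "r < 3" "s < 3"
  obtains x y where "off_diag M r s = {x, y}" "partners (center M r s) x y"
    "{x, y} \<inter> {blk M r s 1 0, blk M r s 1 2} = {}" "{x, y} \<inter> {blk M r s 0 1, blk M r s 2 1} = {}"
proof -
  note Q = modular_magic_blk[OF M rs]
  obtain x y where off: "off_diag M r s = {x, y}" and xy: "partners (center M r s) x y"
    and corners: "{x, y} \<subseteq> {blk M r s 0 0, blk M r s 0 2, blk M r s 2 0, blk M r s 2 2}"
    using modular_magic_square_off_diagonal[OF Q] unfolding off_diag_def center_def by metis
  have "distinct [blk M r s 0 0, blk M r s 0 1, blk M r s 0 2, blk M r s 1 0, blk M r s 1 1,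
      blk M r s 1 2, blk M r s 2 0, blk M r s 2 1, blk M r s 2 2]"
    by (rule modular_magic_square_distinct[OF Q])
  with corners have "{x, y} \<inter> {blk M r s 1 0, blk M r s 1 2} = {}"
    and "{x, y} \<inter> {blk M r s 0 1, blk M r s 2 1} = {}"
    by auto
  with off xy show thesis by (rule that)
qed

lemma modular_magic_center_in_block_row:
  assumes M: "modular_magic M" and r: "r < 3" and j: "j \<in> {0, 3, 6}"
  shows "j \<in> center M r ` {..<3}"
proof -
  have ne: "center M r s \<noteq> center M r s'" if "s < 3" "s' < 3" "s \<noteq> s'" for s s'
  proof -
    have "1 < (3::nat)" by simp
    with modular_magic_mid_row_inj[OF M r that(1,2) this this] that(3) show ?thesis
      unfolding center_def by blast
  qed
  have "{..<3::nat} = {0, 1, 2}" by auto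
  moreover have "{center M r 0, center M r 1, center M r 2} = {0, 3, 6}"
  proof (rule distinct_mult3_eq)
    show "{center M r 0, center M r 1, center M r 2} \<subseteq> {0, 3, 6}"
      using modular_magic_center[OF M r] by simp
    show "distinct [center M r 0, center M r 1, center M r 2]"
      using ne[of 0 1] ne[of 0 2] ne[of 1 2] by simp
  qed
  ultimately show ?thesis using j by simp
qed

lemma off_diag_class_eq: "off_diag M r s = {x, y} \<Longrightarrow> off_diag_class M r s = pair_class x y"
  by (cases "x \<le> y") (simp_all add: off_diag_class_def pair_class_commute max_def min_def)

lemma off_diag_class:
  assumes M: "modular_magic M" and rs: "r < 3" "s < 3"
  shows "off_diag_class M r s \<in> {1, 4, 7}"
    and "off_diag_class M r s \<noteq> mid_row_class M r s"
    and "off_diag_class M r s \<noteq> mid_col_class M r s"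
proof -
  obtain x y where off: "off_diag M r s = {x, y}" and xy: "partners (center M r s) x y"
    and row: "{x, y} \<inter> {blk M r s 1 0, blk M r s 1 2} = {}"
    and col: "{x, y} \<inter> {blk M r s 0 1, blk M r s 2 1} = {}"
    by (rule off_diag_partners[OF M rs])
  note center = modular_magic_center[OF M rs]
  show "off_diag_class M r s \<in> {1, 4, 7}"
    unfolding off_diag_class_eq[OF off] by (rule partners_class_range[OF center xy])
  show "off_diag_class M r s \<noteq> mid_row_class M r s"
    unfolding off_diag_class_eq[OF off] mid_row_class_def
    by (rule partners_disjoint_imp_class_ne[OF center xy modular_magic_mid_row_partners[OF M rs] row])
  show "off_diag_class M r s \<noteq> mid_col_class M r s"
    unfolding off_diag_class_eq[OF off] mid_col_class_def
    by (rule partners_disjoint_imp_class_ne[OF center xy modular_magic_mid_col_partners[OF M rs] col])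
qed

lemma off_diag_class_eq_imp_eq:
  assumes M: "modular_magic M" and rs: "r < 3" "s < 3" "r' < 3" "s' < 3"
    and same_center: "center M r s = center M r' s'"
    and same_class: "off_diag_class M r s = off_diag_class M r' s'"
  shows "off_diag M r s = off_diag M r' s'"
proof -
  obtain x y where off: "off_diag M r s = {x, y}" and xy: "partners (center M r s) x y"
    by (rule off_diag_partners[OF M rs(1,2)])
  obtain x' y' where off': "off_diag M r' s' = {x', y'}" and xy': "partners (center M r' s') x' y'"
    by (rule off_diag_partners[OF M rs(3,4)])
  have "{x, y} = {x', y'}"
  proof (rule partners_same_class_imp_eq[OF modular_magic_center[OF M rs(1,2)] xy])
    show "partners (center M r s) x' y'" using xy' same_center by simp
    show "pair_class x y = pair_class x' y'"
      using same_class by (simp add: off_diag_class_eq[OF off] off_diag_class_eq[OF off'])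
  qed
  then show ?thesis using off off' by simp
qed

lemma mid_row_class_range:
  assumes "modular_magic M" "r < 3" "s < 3"
  shows "mid_row_class M r s \<in> {1, 4, 7}"
  unfolding mid_row_class_def
  by (rule partners_class_range[OF modular_magic_center[OF assms] modular_magic_mid_row_partners[OF assms]])

lemma mid_col_class_range:
  assumes "modular_magic M" "r < 3" "s < 3"
  shows "mid_col_class M r s \<in> {1, 4, 7}"
  unfolding mid_col_class_def
  by (rule partners_class_range[OF modular_magic_center[OF assms] modular_magic_mid_col_partners[OF assms]])

lemma mid_row_class_ne_mid_col_class:
  assumes M: "modular_magic M" and rs: "r < 3" "s < 3" "r' < 3" "s' < 3"
  shows "mid_row_class M r s \<noteq> mid_col_class M r' s'"
proof -
  have "distinct [blk M r s' 0 0, blk M r s' 0 1, blk M r s' 0 2, blk M r s' 1 0, blk M r s' 1 1,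
      blk M r s' 1 2, blk M r s' 2 0, blk M r s' 2 1, blk M r s' 2 2]"
    by (rule modular_magic_square_distinct[OF modular_magic_blk[OF M rs(1,4)]])
  then have "{blk M r s' 1 0, blk M r s' 1 2} \<inter> {blk M r s' 0 1, blk M r s' 2 1} = {}"
    by auto
  then have "mid_row_class M r s' \<noteq> mid_col_class M r s'"
    unfolding mid_row_class_def mid_col_class_def
    by (rule partners_disjoint_imp_class_ne[OF modular_magic_center[OF M rs(1,4)]
          modular_magic_mid_row_partners[OF M rs(1,4)] modular_magic_mid_col_partners[OF M rs(1,4)]])
  moreover have "mid_row_class M r s = mid_row_class M r s'"
    by (rule mid_row_class_same_block_row[OF M rs(1,2,4)])
  moreover have "mid_col_class M r' s' = mid_col_class M r s'"
    by (rule mid_col_class_same_block_col[OF M rs(3,1,4)])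
  ultimately show ?thesis by simp
qed

lemma card_blocks_with_center:
  assumes "modular_magic M" "j \<in> {0, 3, 6}"
  shows "finite {(a, b). a < 3 \<and> b < 3 \<and> center M a b = j}"
    and "3 \<le> card {(a, b). a < 3 \<and> b < 3 \<and> center M a b = j}"
proof -
  let ?P = "{(a, b). a < 3 \<and> b < 3 \<and> center M a b = j}"
  show fin: "finite ?P" by (rule finite_subset[of _ "{..<3} \<times> {..<3}"]) auto
  have "{..<3} \<subseteq> fst ` ?P"
    using modular_magic_center_in_block_row[OF assms(1) _ assms(2)] by force
  then have "card {..<3::nat} \<le> card (fst ` ?P)" using fin by (intro card_mono) auto
  also have "\<dots> \<le> card ?P" using fin by (rule card_image_le)
  finally show "3 \<le> card ?P" by simp
qed

theorem lemma2p1: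
  fixes M :: board and j :: nat
  assumes "modular_magic M"
    and "j \<in> {0, 3, 6}"
  shows "\<exists>p \<in> {(a,b). a < 3 \<and> b < 3 \<and> center M a b = j}.
         \<exists>q \<in> {(a,b). a < 3 \<and> b < 3 \<and> center M a b = j}.
           p \<noteq> q \<and> off_diag M (fst p) (snd p) = off_diag M (fst q) (snd q)"
proof -
  define P where "P = {(a, b). a < 3 \<and> b < 3 \<and> center M a b = j}"
  have P: "fst p < 3" "snd p < 3" "center M (fst p) (snd p) = j" if "p \<in> P" for p
    using that unfolding P_def by auto
  have "\<exists>p\<in>P. \<exists>q\<in>P. p \<noteq> q \<and> off_diag_class M (fst p) (snd p) = off_diag_class M (fst q) (snd q)"
  proof (rule collision_avoiding_disjoint_labellings)
    show "card {1, 4, 7 :: int} = 3" by simp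
    show "finite P" "3 \<le> card P" unfolding P_def by (rule card_blocks_with_center[OF assms])+
    show "(\<lambda>p. mid_row_class M (fst p) (snd p)) ` P \<subseteq> {1, 4, 7}"
      using mid_row_class_range[OF assms(1) P(1,2)] by blast
    show "(\<lambda>p. mid_col_class M (fst p) (snd p)) ` P \<subseteq> {1, 4, 7}"
      using mid_col_class_range[OF assms(1) P(1,2)] by blast
    show "(\<lambda>p. off_diag_class M (fst p) (snd p)) ` P \<subseteq> {1, 4, 7}"
      using off_diag_class(1)[OF assms(1) P(1,2)] by blast
    show "mid_row_class M (fst p) (snd p) \<noteq> mid_col_class M (fst q) (snd q)"
      if "p \<in> P" "q \<in> P" for p q
      by (rule mid_row_class_ne_mid_col_class[OF assms(1) P(1,2)[OF that(1)] P(1,2)[OF that(2)]])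
  qed (use off_diag_class(2,3)[OF assms(1) P(1,2)] in blast)+
  then obtain p q where pq: "p \<in> P" "q \<in> P" "p \<noteq> q"
    and "off_diag_class M (fst p) (snd p) = off_diag_class M (fst q) (snd q)"
    by blast
  then have "off_diag M (fst p) (snd p) = off_diag M (fst q) (snd q)"
    using off_diag_class_eq_imp_eq[OF assms(1) P(1,2)[OF pq(1)] P(1,2)[OF pq(2)]] P(3) by simp
  with pq show ?thesis unfolding P_def by blast
qed

end
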